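(* Let $N\ge 1$ be an integer and $a>0$ real. Let $H=H^{(N)}(a)$ be the real $N\times N$ tridiagonal matrix with entries $H_{nn}=a+2n-1$ ($n=1,\dots,N$), $H_{n,n+1}=-n$ and $H_{n+1,n}=-(a+n)$ ($n=1,\dots,N-1$), all other entries zero. Let $\Theta_0=\Theta_0^{(N)}(a)$ be the diagonal $N\times N$ matrix with $\theta_{11}=1$ and $$\theta_{nn}=\frac{(n-1)!}{(a+n-1)(a+n-2)\cdots(a+2)(a+1)},\qquad n=2,3,\dots,N.$$ Then $\Theta_0$ is positive definite and satisfies $H^\dagger\Theta_0=\Theta_0 H$, i.e. $\Theta_0$ is a (diagonal) metric making $H$ Hermitian in the inner product $\langle x,y\rangle_{\Theta_0}=x^\dagger\Theta_0 y$.
   Context: $H^\dagger$ denotes the conjugate transpose (here the transpose, $H$ being real). A metric for $H$ is a positive definite Hermitian matrix $\Theta$ with $H^\dagger\Theta=\Theta H$ (Dieudonné relation). *)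

theory Defs
  imports "Jordan_Normal_Form.Matrix"
begin

text \<open>Matrices are indexed from 0 in Jordan_Normal_Form; the paper's index n (1-based)
corresponds to index i = n - 1 here.\<close>

definition H_mat :: "nat \<Rightarrow> real \<Rightarrow> real mat" where
  "H_mat N a = mat N N (\<lambda>(i, j).
     if i = j then a + 2 * real (i + 1) - 1
     else if j = i + 1 then - real (i + 1)
     else if i = j + 1 then - (a + real (j + 1))
     else 0)"

definition theta0 :: "real \<Rightarrow> nat \<Rightarrow> real" where
  "theta0 a n = (if n = 1 then 1
                 else fact (n - 1) / (\<Prod>k = 1..n - 1. (a + real k)))"

definition Theta0_mat :: "nat \<Rightarrow> real \<Rightarrow> real mat" where
  "Theta0_mat N a = mat N N (\<lambda>(i, j). if i = j then theta0 a (i + 1) else 0)"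

text \<open>Positive definite Hermitian matrix (real case: Hermitian = symmetric).\<close>
definition pos_def_herm :: "real mat \<Rightarrow> bool" where
  "pos_def_herm A \<longleftrightarrow> square_mat A \<and> transpose_mat A = A \<and>
     (\<forall>x \<in> carrier_vec (dim_row A). x \<noteq> 0\<^sub>v (dim_row A) \<longrightarrow> x \<bullet> (A *\<^sub>v x) > 0)"

end

theory Submission
  imports Defs
begin

text \<open>\<open>\<Theta>\<^sub>0\<close> is diagonal with positive entries, hence positive definite. For a diagonal
  \<open>D = diag(d)\<close> the relation \<open>H\<^sup>T D = D H\<close> says \<open>d\<^sub>j H\<^sub>j\<^sub>i = d\<^sub>i H\<^sub>i\<^sub>j\<close>; for tridiagonal \<open>H\<close> this
  is one condition per off-diagonal pair, \<open>(a + n) \<theta>\<^sub>n\<^sub>+\<^sub>1 = n \<theta>\<^sub>n\<close>, which is exactly the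
  recursion defining the ratios of consecutive \<open>\<theta>\<^sub>n\<close>.\<close>

lemma mat_diag_mult_vec:
  assumes "x \<in> carrier_vec n"
  shows "mat_diag n d *\<^sub>v x = vec n (\<lambda>i. d i * x $ i)"
proof (rule eq_vecI)
  fix i assume "i < dim_vec (vec n (\<lambda>i. d i * x $ i))"
  then have i: "i < n" by simp
  have "row (mat_diag n d) i \<bullet> x = (\<Sum>k<n. (if i = k then d k else 0) * x $ k)"
    using i assms by (simp add: mat_diag_def scalar_prod_def atLeast0LessThan)
  also have "\<dots> = (\<Sum>k<n. if i = k then d k * x $ k else 0)"
    by (rule sum.cong) auto
  also have "\<dots> = d i * x $ i"
    using i by simp
  finally show "(mat_diag n d *\<^sub>v x) $ i = vec n (\<lambda>i. d i * x $ i) $ i"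
    using i by (simp add: mat_diag_def)
qed (simp add: mat_diag_def)

lemma quadratic_form_mat_diag:
  fixes d :: "nat \<Rightarrow> 'a :: comm_semiring_1"
  assumes "x \<in> carrier_vec n"
  shows "x \<bullet> (mat_diag n d *\<^sub>v x) = (\<Sum>i<n. d i * (x $ i)\<^sup>2)"
  using assms
  by (simp add: mat_diag_mult_vec scalar_prod_def atLeast0LessThan, intro sum.cong)
     (simp_all add: power2_eq_square algebra_simps)

lemma pos_def_herm_mat_diag:
  fixes d :: "nat \<Rightarrow> real"
  assumes pos: "\<And>i. i < n \<Longrightarrow> d i > 0"
  shows "pos_def_herm (mat_diag n d)"
  unfolding pos_def_herm_def
proof (intro conjI ballI impI)
  show "square_mat (mat_diag n d)" "transpose_mat (mat_diag n d) = mat_diag n d"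
    by (auto simp: mat_diag_def)
  fix x :: "real vec" assume x: "x \<in> carrier_vec (dim_row (mat_diag n d))"
    and "x \<noteq> 0\<^sub>v (dim_row (mat_diag n d))"
  then have x: "x \<in> carrier_vec n" and "x \<noteq> 0\<^sub>v n"
    by (simp_all add: mat_diag_def)
  then obtain i where i: "i < n" "x $ i \<noteq> 0"
    by (auto simp: vec_eq_iff)
  have "0 < (\<Sum>k<n. d k * (x $ k)\<^sup>2)"
    using i pos by (intro sum_pos2[of _ i]) (simp_all add: less_imp_le)
  then show "x \<bullet> (mat_diag n d *\<^sub>v x) > 0"
    using x by (simp add: quadratic_form_mat_diag)
qed

lemma transpose_mult_mat_diag_eq_iff:
  assumes A: "A \<in> carrier_mat n n"
  shows "transpose_mat A * mat_diag n d = mat_diag n d * A \<longleftrightarrow>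
         (\<forall>i<n. \<forall>j<n. A $$ (j, i) * d j = d i * A $$ (i, j))"
proof -
  have "transpose_mat A * mat_diag n d = mat n n (\<lambda>(i, j). A $$ (j, i) * d j)"
    using A by (subst mat_diag_mult_right[of _ n]) auto
  moreover have "mat_diag n d * A = mat n n (\<lambda>(i, j). d i * A $$ (i, j))"
    using A by (rule mat_diag_mult_left)
  ultimately show ?thesis
    by (auto simp: mat_eq_iff)
qed

lemma theta0_Suc: "theta0 a (Suc n) = fact n / (\<Prod>k = 1..n. (a + real k))"
  by (simp add: theta0_def)

lemma theta0_pos:
  assumes "a > -1"
  shows "theta0 a n > 0"
  using assms by (auto simp: theta0_def intro!: divide_pos_pos prod_pos)

lemma theta0_Suc_Suc:
  assumes "a > -1"
  shows "(a + real (Suc n)) * theta0 a (Suc (Suc n)) = real (Suc n) * theta0 a (Suc n)"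
proof -
  define P where "P = (\<Prod>k = 1..n. (a + real k))"
  define q where "q = a + real (Suc n)"
  have "P \<noteq> 0" "q \<noteq> 0"
    using assms unfolding P_def q_def by (auto intro!: prod_pos[THEN less_imp_neq, symmetric])
  moreover have "theta0 a (Suc n) = fact n / P"
    by (simp add: theta0_Suc P_def)
  moreover have "theta0 a (Suc (Suc n)) = real (Suc n) * fact n / (P * q)"
    unfolding theta0_Suc P_def q_def by (simp add: prod.nat_ivl_Suc')
  ultimately show ?thesis
    unfolding q_def [symmetric] by (simp del: of_nat_Suc)
qed

lemma Theta0_mat_eq_mat_diag: "Theta0_mat N a = mat_diag N (\<lambda>i. theta0 a (Suc i))"
  by (auto simp: Theta0_mat_def mat_diag_def)

lemma H_mat_theta0_balanced:
  assumes "a > -1" "i < N" "j < N"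
  shows "H_mat N a $$ (j, i) * theta0 a (Suc j) = theta0 a (Suc i) * H_mat N a $$ (i, j)"
proof -
  consider "j = Suc i" | "i = Suc j" | "i = j \<or> (j \<noteq> Suc i \<and> i \<noteq> Suc j)"
    by blast
  then show ?thesis
  proof cases
    case 1
    then show ?thesis
      using assms theta0_Suc_Suc[OF assms(1), of i] by (simp add: H_mat_def algebra_simps)
  next
    case 2
    then show ?thesis
      using assms theta0_Suc_Suc[OF assms(1), of j] by (simp add: H_mat_def algebra_simps)
  qed (use assms in \<open>auto simp: H_mat_def\<close>)
qed

theorem lemma1:
  fixes N :: nat and a :: real
  assumes "N \<ge> 1" and "a > 0"
  shows "pos_def_herm (Theta0_mat N a) \<and>
         transpose_mat (H_mat N a) * Theta0_mat N a = Theta0_mat N a * H_mat N a"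
proof
  have a: "a > -1" using \<open>a > 0\<close> by simp
  show "pos_def_herm (Theta0_mat N a)"
    unfolding Theta0_mat_eq_mat_diag
    by (rule pos_def_herm_mat_diag) (rule theta0_pos[OF a])
  have H: "H_mat N a \<in> carrier_mat N N"
    by (simp add: H_mat_def)
  show "transpose_mat (H_mat N a) * Theta0_mat N a = Theta0_mat N a * H_mat N a"
    unfolding Theta0_mat_eq_mat_diag transpose_mult_mat_diag_eq_iff[OF H]
    by (simp add: H_mat_theta0_balanced[OF a])
qed

end
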